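(* Let $G$ be a compact Hausdorff topological group and let $X$ be a Hausdorff topological group on which $G$ acts (continuously) by topological group homomorphisms, such that $X$ is $G$-connected. Then $\mathbf{TC}_G(X)=\mathrm{cat}_G(X)$.
   Context: $X$ is $G$-connected if $X^H=\{x: hx=x\ \forall h\in H\}$ is path-connected for every closed subgroup $H\le G$. A $G$-homotopy is an equivariant homotopy with trivial action on $I$. An invariant set is $G$-categorical if its inclusion is $G$-homotopic to a map into a single orbit; $\mathrm{cat}_G(X)$ is the least number of open $G$-categorical sets covering $X$. $\mathbf{TC}_G(X)$ is the least $k$ such that $X\times X$ (diagonal action) is covered by $k$ $G$-invariant open sets $U_i$ each admitting a $G$-map $s\colon U_i\to X^I$ with $\pi s$ $G$-homotopic to the inclusion ($\infty$ if none); $X^I$ is the path space (compact-open topology, action $(g\gamma)(t)=g\gamma(t)$), $\pi(\gamma)=(\gamma(0),\gamma(1))$. *)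

theory Defs
  imports "HOL-Analysis.Analysis" "HOL-Algebra.Group" "HOL-Library.Extended_Nat"
begin

definition topological_group :: "('a, 'b) monoid_scheme \<Rightarrow> 'a topology \<Rightarrow> bool" where
  "topological_group G T \<longleftrightarrow> group G \<and> topspace T = carrier G \<and>
     continuous_map (prod_topology T T) T (\<lambda>(x, y). x \<otimes>\<^bsub>G\<^esub> y) \<and>
     continuous_map T T (\<lambda>x. inv\<^bsub>G\<^esub> x)"

definition continuous_action ::
  "('g, 'b) monoid_scheme \<Rightarrow> 'g topology \<Rightarrow> 'x topology \<Rightarrow> ('g \<Rightarrow> 'x \<Rightarrow> 'x) \<Rightarrow> bool" where
  "continuous_action G TG TX act \<longleftrightarrow>
     continuous_map (prod_topology TG TX) TX (\<lambda>(g, x). act g x) \<and>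
     (\<forall>x\<in>topspace TX. act \<one>\<^bsub>G\<^esub> x = x) \<and>
     (\<forall>g\<in>carrier G. \<forall>h\<in>carrier G. \<forall>x\<in>topspace TX. act (g \<otimes>\<^bsub>G\<^esub> h) x = act g (act h x))"

definition fixed_set :: "'x topology \<Rightarrow> ('g \<Rightarrow> 'x \<Rightarrow> 'x) \<Rightarrow> 'g set \<Rightarrow> 'x set" where
  "fixed_set TX act H = {x \<in> topspace TX. \<forall>h\<in>H. act h x = x}"

definition G_connected ::
  "('g, 'b) monoid_scheme \<Rightarrow> 'g topology \<Rightarrow> 'x topology \<Rightarrow> ('g \<Rightarrow> 'x \<Rightarrow> 'x) \<Rightarrow> bool" where
  "G_connected G TG TX act \<longleftrightarrow>
     (\<forall>H. subgroup H G \<and> closedin TG H \<longrightarrow> path_connectedin TX (fixed_set TX act H))"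

definition invariant_set :: "('g, 'b) monoid_scheme \<Rightarrow> ('g \<Rightarrow> 'x \<Rightarrow> 'x) \<Rightarrow> 'x set \<Rightarrow> bool" where
  "invariant_set G act U \<longleftrightarrow> (\<forall>g\<in>carrier G. \<forall>x\<in>U. act g x \<in> U)"

definition equivariant_on ::
  "('g, 'b) monoid_scheme \<Rightarrow> ('g \<Rightarrow> 'x \<Rightarrow> 'x) \<Rightarrow> ('g \<Rightarrow> 'y \<Rightarrow> 'y) \<Rightarrow> 'x set \<Rightarrow> ('x \<Rightarrow> 'y) \<Rightarrow> bool" where
  "equivariant_on G act act' U f \<longleftrightarrow> (\<forall>g\<in>carrier G. \<forall>x\<in>U. f (act g x) = act' g (f x))"

text \<open>G-homotopy of maps defined on the invariant subset U of TX into TY: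
  a homotopy each of whose stages is equivariant (trivial action on I).\<close>
definition G_homotopic ::
  "('g, 'b) monoid_scheme \<Rightarrow> ('g \<Rightarrow> 'x \<Rightarrow> 'x) \<Rightarrow> ('g \<Rightarrow> 'y \<Rightarrow> 'y) \<Rightarrow>
   'x topology \<Rightarrow> 'y topology \<Rightarrow> 'x set \<Rightarrow> ('x \<Rightarrow> 'y) \<Rightarrow> ('x \<Rightarrow> 'y) \<Rightarrow> bool" where
  "G_homotopic G act act' TX TY U f f' \<longleftrightarrow>
     homotopic_with (\<lambda>k. equivariant_on G act act' U k) (subtopology TX U) TY f f'"

definition orbit :: "('g, 'b) monoid_scheme \<Rightarrow> ('g \<Rightarrow> 'x \<Rightarrow> 'x) \<Rightarrow> 'x \<Rightarrow> 'x set" where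
  "orbit G act x = (\<lambda>g. act g x) ` carrier G"

definition G_categorical ::
  "('g, 'b) monoid_scheme \<Rightarrow> 'x topology \<Rightarrow> ('g \<Rightarrow> 'x \<Rightarrow> 'x) \<Rightarrow> 'x set \<Rightarrow> bool" where
  "G_categorical G TX act U \<longleftrightarrow> U \<subseteq> topspace TX \<and> invariant_set G act U \<and>
     (\<exists>f x0. x0 \<in> topspace TX \<and> G_homotopic G act act TX TX U id f \<and> f ` U \<subseteq> orbit G act x0)"

text \<open>Equivariant LS category (non-normalized; \<infinity> if no finite cover exists).\<close>
definition cat_G ::
  "('g, 'b) monoid_scheme \<Rightarrow> 'x topology \<Rightarrow> ('g \<Rightarrow> 'x \<Rightarrow> 'x) \<Rightarrow> enat" where
  "cat_G G TX act = Inf {enat k | k. \<exists>V :: nat \<Rightarrow> 'x set.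
      (\<forall>i<k. openin TX (V i) \<and> G_categorical G TX act (V i)) \<and>
      topspace TX \<subseteq> (\<Union>i<k. V i)}"

definition path_space :: "'x topology \<Rightarrow> (real \<Rightarrow> 'x) set" where
  "path_space TX = {\<gamma>. continuous_map (top_of_set {0..1}) TX \<gamma> \<and> (\<forall>t. t \<notin> {0..1} \<longrightarrow> \<gamma> t = undefined)}"

definition compact_open_path_topology :: "'x topology \<Rightarrow> (real \<Rightarrow> 'x) topology" where
  "compact_open_path_topology TX =
     subtopology
       (topology_generated_by {{\<gamma>. \<gamma> ` K \<subseteq> V} | K V. compact K \<and> K \<subseteq> {0..1} \<and> openin TX V})
       (path_space TX)"

definition diag_action :: "('g \<Rightarrow> 'x \<Rightarrow> 'x) \<Rightarrow> 'g \<Rightarrow> 'x \<times> 'x \<Rightarrow> 'x \<times> 'x" where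
  "diag_action act g = (\<lambda>(a, b). (act g a, act g b))"

text \<open>Equivariant topological complexity (\<infinity> if no finite cover exists).\<close>
definition TC_G ::
  "('g, 'b) monoid_scheme \<Rightarrow> 'x topology \<Rightarrow> ('g \<Rightarrow> 'x \<Rightarrow> 'x) \<Rightarrow> enat" where
  "TC_G G TX act = Inf {enat k | k. \<exists>(V :: nat \<Rightarrow> ('x \<times> 'x) set) (s :: nat \<Rightarrow> 'x \<times> 'x \<Rightarrow> real \<Rightarrow> 'x).
      (\<forall>i<k. openin (prod_topology TX TX) (V i) \<and>
             invariant_set G (diag_action act) (V i) \<and>
             continuous_map (subtopology (prod_topology TX TX) (V i)) (compact_open_path_topology TX) (s i) \<and>
             (\<forall>g\<in>carrier G. \<forall>u\<in>V i. \<forall>t\<in>{0..1}. s i (diag_action act g u) t = act g (s i u t)) \<and>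
             G_homotopic G (diag_action act) (diag_action act) (prod_topology TX TX) (prod_topology TX TX)
               (V i) (\<lambda>u. (s i u 0, s i u 1)) id) \<and>
      topspace (prod_topology TX TX) \<subseteq> (\<Union>i<k. V i)}"

end

theory Submission
  imports Defs
begin

text \<open>A motion planner on an invariant open \<open>U \<subseteq> X \<times> X\<close> equivariantly deforms the projection
  \<open>(x, y) \<mapsto> x\<close> into \<open>(x, y) \<mapsto> y\<close>; restricted to the slice \<open>{1} \<times> V\<close> this contracts
  \<open>V = {x. (1, x) \<in> U}\<close> equivariantly onto the fixed point \<open>1\<close>, so \<open>V\<close> is \<open>G\<close>-categorical.
  Conversely, a \<open>G\<close>-categorical \<open>V\<close> deforms into an orbit \<open>G x\<^sub>0\<close>, and the orbit contracts
  equivariantly to \<open>1\<close>: a path from \<open>x\<^sub>0\<close> to \<open>1\<close> in the path-connected fixed set of the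
  stabilizer \<open>G\<^sub>x\<^sub>0\<close> is spread over the orbit by \<open>g x\<^sub>0 \<mapsto> g \<gamma>(t)\<close>, which is continuous because
  the orbit map of the compact group \<open>G\<close> is a quotient map. Left translation then deforms
  \<open>{(x, y). x\<inverse>y \<in> V}\<close> equivariantly onto the diagonal, on which constant paths form a motion
  planner. Hence open covers of both kinds correspond with the same number of members.\<close>

lemma topspace_compact_open_path_topology [simp]:
  "topspace (compact_open_path_topology TX) = path_space TX"
proof -
  have "UNIV \<in> {{\<gamma>. \<gamma> ` K \<subseteq> V} | K V. compact K \<and> K \<subseteq> {0..1} \<and> openin TX V}"
    by (rule CollectI, rule exI[of _ "{}"], rule exI[of _ "{}"]) auto
  then have "\<Union>{{\<gamma>::real \<Rightarrow> 'a. \<gamma> ` K \<subseteq> V} | K V. compact K \<and> K \<subseteq> {0..1} \<and> openin TX V} = UNIV"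
    by blast
  then show ?thesis
    unfolding compact_open_path_topology_def by simp
qed

lemma openin_compact_open_preimage:
  assumes S: "continuous_map Y (compact_open_path_topology TX) S"
    and "compact K" "K \<subseteq> {0..1}" "openin TX W"
  shows "openin Y {u \<in> topspace Y. S u ` K \<subseteq> W}"
proof -
  have "openin (compact_open_path_topology TX) ({\<gamma>. \<gamma> ` K \<subseteq> W} \<inter> path_space TX)"
    unfolding compact_open_path_topology_def openin_subtopology
    by (rule exI[of _ "{\<gamma>. \<gamma> ` K \<subseteq> W}"], rule conjI[OF topology_generated_by_Basis])
       (use assms in auto)
  then have "openin Y {u \<in> topspace Y. S u \<in> {\<gamma>. \<gamma> ` K \<subseteq> W} \<inter> path_space TX}"
    using S openin_continuous_map_preimage by blast
  moreover have "S u \<in> path_space TX" if "u \<in> topspace Y" for u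
    using continuous_map_image_subset_topspace[OF S] that by auto
  then have "{u \<in> topspace Y. S u \<in> {\<gamma>. \<gamma> ` K \<subseteq> W} \<inter> path_space TX} = {u \<in> topspace Y. S u ` K \<subseteq> W}"
    by blast
  ultimately show ?thesis
    by simp
qed

lemma path_in_compact_open_topology:
  assumes "continuous_map Y (compact_open_path_topology TX) S" "u \<in> topspace Y"
  shows "continuous_map (top_of_set {0..1}) TX (S u)"
  using continuous_map_image_subset_topspace[OF assms(1)] assms(2)
  unfolding topspace_compact_open_path_topology path_space_def by blast

text \<open>Uses local compactness of \<open>[0,1]\<close>: a compact neighbourhood \<open>N\<close> of \<open>t\<close> with
  \<open>S u ` N \<subseteq> W\<close> gives a compact-open neighbourhood of the path \<open>S u\<close>.\<close>
lemma path_evaluation_local_box: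
  assumes S: "continuous_map Y (compact_open_path_topology TX) S"
    and W: "openin TX W" and u: "u \<in> topspace Y" and t: "t \<in> {0..1}" and tW: "S u t \<in> W"
  obtains T where "openin (prod_topology (top_of_set {0..1}) Y) T" "(t, u) \<in> T"
    "\<And>t' u'. (t', u') \<in> T \<Longrightarrow> S u' t' \<in> W"
proof -
  have "openin (top_of_set {0..1}) {x \<in> {0..1}. S u x \<in> W}"
    using openin_continuous_map_preimage[OF path_in_compact_open_topology[OF S u] W] by simp
  then obtain Op where Op: "open Op" "{x \<in> {0..1}. S u x \<in> W} = {0..1} \<inter> Op"
    by (auto simp: openin_open)
  then obtain d where d: "d > 0" "ball t d \<subseteq> Op"
    using t tW open_contains_ball by blast
  define N where "N = cball t (d/2) \<inter> {0..1::real}"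
  have "compact N" "N \<subseteq> {0..1}"
    unfolding N_def by (auto simp: compact_Int_closed)
  moreover have "N \<subseteq> Op"
    using d unfolding N_def by (auto simp: subset_eq dist_commute)
  ultimately have Q: "openin Y {u' \<in> topspace Y. S u' ` N \<subseteq> W}" and uQ: "S u ` N \<subseteq> W"
    using openin_compact_open_preimage[OF S _ _ W] Op by blast+
  show ?thesis
  proof
    show "openin (prod_topology (top_of_set {0..1}) Y)
            (({0..1} \<inter> ball t (d/2)) \<times> {u' \<in> topspace Y. S u' ` N \<subseteq> W})"
      using Q by (simp add: openin_prod_Times_iff openin_open_Int)
    show "(t, u) \<in> ({0..1} \<inter> ball t (d/2)) \<times> {u' \<in> topspace Y. S u' ` N \<subseteq> W}"
      using t u uQ d by auto
  next
    fix t' u' assume "(t', u') \<in> ({0..1} \<inter> ball t (d/2)) \<times> {u' \<in> topspace Y. S u' ` N \<subseteq> W}"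
    then show "S u' t' \<in> W"
      unfolding N_def by (auto simp: dist_commute less_imp_le)
  qed
qed

lemma continuous_map_path_evaluation:
  assumes S: "continuous_map Y (compact_open_path_topology TX) S"
  shows "continuous_map (prod_topology (top_of_set {0..1}) Y) TX (\<lambda>(t, u). S u t)"
  unfolding continuous_map_def
proof (intro conjI allI impI)
  show "(\<lambda>(t, u). S u t) \<in> topspace (prod_topology (top_of_set {0..1::real}) Y) \<rightarrow> topspace TX"
  proof
    fix p assume "p \<in> topspace (prod_topology (top_of_set {0..1::real}) Y)"
    then obtain t u where "p = (t, u)" "t \<in> {0..1}" "u \<in> topspace Y"
      by auto
    then show "(\<lambda>(t, u). S u t) p \<in> topspace TX"
      using continuous_map_image_subset_topspace[OF path_in_compact_open_topology[OF S]] by force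
  qed
next
  fix W assume W: "openin TX W"
  show "openin (prod_topology (top_of_set {0..1::real}) Y)
          {p \<in> topspace (prod_topology (top_of_set {0..1::real}) Y). (\<lambda>(t, u). S u t) p \<in> W}"
    (is "openin ?Z ?A")
  proof (subst openin_subopen, intro ballI)
    fix p assume "p \<in> ?A"
    then obtain t u where p: "p = (t, u)" "t \<in> {0..1}" "u \<in> topspace Y" "S u t \<in> W"
      by auto
    then obtain T where T: "openin ?Z T" "(t, u) \<in> T" "\<And>t' u'. (t', u') \<in> T \<Longrightarrow> S u' t' \<in> W"
      using path_evaluation_local_box[OF S W] by metis
    have "T \<subseteq> ?A"
      using T(3) openin_subset[OF T(1)] by auto
    then show "\<exists>T. openin ?Z T \<and> p \<in> T \<and> T \<subseteq> ?A"
      using T p(1) by blast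
  qed
qed

lemma continuous_map_constant_paths:
  assumes f: "continuous_map Y TX f"
  shows "continuous_map Y (compact_open_path_topology TX) (\<lambda>u t. if t \<in> {0..1} then f u else undefined)"
proof -
  define F where "F = (\<lambda>u (t::real). if t \<in> {0..1} then f u else undefined)"
  define \<B> where "\<B> = {{\<gamma>::real \<Rightarrow> _. \<gamma> ` K \<subseteq> V} | K V. compact K \<and> K \<subseteq> {0..1} \<and> openin TX V}"
  have "openin Y (F -` B \<inter> topspace Y)" if "B \<in> \<B>" for B
  proof -
    obtain K V where B: "B = {\<gamma>. \<gamma> ` K \<subseteq> V}" "K \<subseteq> {0..1}" "openin TX V"
      using \<open>B \<in> \<B>\<close> unfolding \<B>_def by blast
    show ?thesis
    proof (cases "K = {}")
      case False
      then have "F -` B \<inter> topspace Y = {u \<in> topspace Y. f u \<in> V}"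
        using B unfolding F_def by (auto simp del: atLeastAtMost_iff)
      then show ?thesis
        using openin_continuous_map_preimage[OF f B(3)] by simp
    qed (use B in auto)
  qed
  moreover have "UNIV \<in> \<B>"
    unfolding \<B>_def by (rule CollectI, rule exI[of _ "{}"], rule exI[of _ "{}"]) auto
  ultimately have "continuous_map Y (topology_generated_by \<B>) F"
    unfolding continuous_on_generated_topo_iff by blast
  moreover have "F ` topspace Y \<subseteq> path_space TX"
    using continuous_map_image_subset_topspace[OF f]
    by (auto simp: path_space_def F_def intro!: continuous_map_eq[OF continuous_map_const[THEN iffD2]])
  ultimately show ?thesis
    unfolding compact_open_path_topology_def continuous_map_in_subtopology F_def \<B>_def by blast
qed

lemma diag_action_Pair [simp]: "diag_action act g (a, b) = (act g a, act g b)"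
  by (simp add: diag_action_def)

lemma fst_diag_action [simp]: "fst (diag_action act g p) = act g (fst p)"
  by (cases p) simp

lemma snd_diag_action [simp]: "snd (diag_action act g p) = act g (snd p)"
  by (cases p) simp

lemma homotopic_with_equivariant_on:
  fixes a :: "'g \<Rightarrow> 'x \<Rightarrow> 'x" and b :: "'g \<Rightarrow> 'y \<Rightarrow> 'y" and Y :: "'y topology"
  assumes "invariant_set G a U" "U \<subseteq> topspace T"
  shows "homotopic_with (equivariant_on G a b U) (subtopology T U) Y p q \<longleftrightarrow>
    (\<exists>h. continuous_map (prod_topology (top_of_set {0..1::real}) (subtopology T U)) Y h \<and>
         (\<forall>x\<in>U. h (0, x) = p x) \<and> (\<forall>x\<in>U. h (1, x) = q x) \<and>
         (\<forall>t\<in>{0..1}. equivariant_on G a b U (\<lambda>x. h (t, x))))"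
proof (subst homotopic_with)
  fix h k :: "'x \<Rightarrow> 'y" assume "\<And>x. x \<in> topspace (subtopology T U) \<Longrightarrow> h x = k x"
  then have "\<And>x. x \<in> U \<Longrightarrow> h x = k x"
    using assms(2) by auto
  then show "equivariant_on G a b U h \<longleftrightarrow> equivariant_on G a b U k"
    using assms(1) unfolding equivariant_on_def invariant_set_def by metis
qed (use assms(2) in \<open>simp add: inf.absorb2\<close>)

definition equivariant_motion_planner ::
  "('g, 'b) monoid_scheme \<Rightarrow> 'x topology \<Rightarrow> ('g \<Rightarrow> 'x \<Rightarrow> 'x) \<Rightarrow>
   ('x \<times> 'x) set \<Rightarrow> ('x \<times> 'x \<Rightarrow> real \<Rightarrow> 'x) \<Rightarrow> bool" where
  "equivariant_motion_planner G TX act U s \<longleftrightarrow>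
     openin (prod_topology TX TX) U \<and>
     invariant_set G (diag_action act) U \<and>
     continuous_map (subtopology (prod_topology TX TX) U) (compact_open_path_topology TX) s \<and>
     (\<forall>g\<in>carrier G. \<forall>u\<in>U. \<forall>t\<in>{0..1}. s (diag_action act g u) t = act g (s u t)) \<and>
     G_homotopic G (diag_action act) (diag_action act) (prod_topology TX TX) (prod_topology TX TX)
       U (\<lambda>u. (s u 0, s u 1)) id"

lemma TC_G_eq_motion_planner_covers:
  "TC_G G TX act = Inf {enat k | k. \<exists>V s.
      (\<forall>i<k. equivariant_motion_planner G TX act (V i) (s i)) \<and>
      topspace (prod_topology TX TX) \<subseteq> (\<Union>i<k. V i)}"
  unfolding TC_G_def equivariant_motion_planner_def ..

lemma equivariant_motion_planner_projections_homotopic: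
  assumes "equivariant_motion_planner G TX act U s"
  shows "homotopic_with (equivariant_on G (diag_action act) act U)
           (subtopology (prod_topology TX TX) U) TX fst snd"
proof -
  let ?P = "equivariant_on G (diag_action act) act U"
  let ?U = "subtopology (prod_topology TX TX) U"
  have U: "openin (prod_topology TX TX) U" "invariant_set G (diag_action act) U"
    and s: "continuous_map ?U (compact_open_path_topology TX) s"
    and s_equivariant: "\<forall>g\<in>carrier G. \<forall>u\<in>U. \<forall>t\<in>{0..1}. s (diag_action act g u) t = act g (s u t)"
    and planner: "homotopic_with (equivariant_on G (diag_action act) (diag_action act) U) ?U
                    (prod_topology TX TX) (\<lambda>u. (s u 0, s u 1)) id"
    using assms unfolding equivariant_motion_planner_def G_homotopic_def by auto
  have "homotopic_with ?P ?U TX (fst \<circ> (\<lambda>u. (s u 0, s u 1))) (fst \<circ> id)"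
    by (rule homotopic_with_compose_continuous_map_left[OF planner continuous_map_fst])
       (simp add: equivariant_on_def)
  from homotopic_with_symD[OF this] have start: "homotopic_with ?P ?U TX fst (\<lambda>u. s u 0)"
    by (simp add: o_def)
  have "homotopic_with ?P ?U TX (snd \<circ> (\<lambda>u. (s u 0, s u 1))) (snd \<circ> id)"
    by (rule homotopic_with_compose_continuous_map_left[OF planner continuous_map_snd])
       (simp add: equivariant_on_def)
  then have finish: "homotopic_with ?P ?U TX (\<lambda>u. s u 1) snd"
    by (simp add: o_def)
  have "homotopic_with ?P ?U TX (\<lambda>u. s u 0) (\<lambda>u. s u 1)"
    unfolding homotopic_with_equivariant_on[OF U(2) openin_subset[OF U(1)]]
    using continuous_map_path_evaluation[OF s] s_equivariant
    by (intro exI[of _ "\<lambda>(t, u). s u t"]) (auto simp: equivariant_on_def)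
  then show ?thesis
    using homotopic_with_trans[OF homotopic_with_trans[OF start] finish] by blast
qed

lemma continuous_map_inv_mult:
  assumes "topological_group X TX"
  shows "continuous_map (prod_topology TX TX) TX (\<lambda>p. inv\<^bsub>X\<^esub> (fst p) \<otimes>\<^bsub>X\<^esub> snd p)"
proof -
  have inv: "continuous_map TX TX (\<lambda>x. inv\<^bsub>X\<^esub> x)"
    and mult: "continuous_map (prod_topology TX TX) TX (\<lambda>(x, y). x \<otimes>\<^bsub>X\<^esub> y)"
    using assms by (auto simp: topological_group_def)
  have "continuous_map (prod_topology TX TX) (prod_topology TX TX) (\<lambda>p. (inv\<^bsub>X\<^esub> (fst p), snd p))"
    using continuous_map_compose[OF continuous_map_fst inv]
    by (simp add: continuous_map_pairwise o_def continuous_map_snd)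
  from continuous_map_compose[OF this mult] show ?thesis
    by (simp add: o_def)
qed

lemma continuous_map_translated_homotopy:
  assumes X: "topological_group X TX"
    and C: "continuous_map (prod_topology (top_of_set {0..1::real}) (subtopology TX V)) TX C"
  defines "U \<equiv> {p \<in> topspace (prod_topology TX TX). inv\<^bsub>X\<^esub> (fst p) \<otimes>\<^bsub>X\<^esub> snd p \<in> V}"
  shows "continuous_map (prod_topology (top_of_set {0..1}) (subtopology (prod_topology TX TX) U))
           (prod_topology TX TX)
           (\<lambda>z. (fst (snd z), fst (snd z) \<otimes>\<^bsub>X\<^esub> C (fst z, inv\<^bsub>X\<^esub> (fst (snd z)) \<otimes>\<^bsub>X\<^esub> snd (snd z))))"
    (is "continuous_map ?Z _ _")
proof -
  define d where "d = (\<lambda>p. inv\<^bsub>X\<^esub> (fst p) \<otimes>\<^bsub>X\<^esub> snd p)"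
  have "continuous_map (subtopology (prod_topology TX TX) U) (subtopology TX V) d"
    unfolding continuous_map_in_subtopology d_def U_def
    using continuous_map_from_subtopology[OF continuous_map_inv_mult[OF X]] by auto
  then have "continuous_map ?Z (prod_topology (top_of_set {0..1}) (subtopology TX V)) (\<lambda>z. (fst z, d (snd z)))"
    using continuous_map_compose[OF continuous_map_snd]
    by (simp add: continuous_map_pairwise o_def continuous_map_fst)
  from continuous_map_compose[OF this C]
  have "continuous_map ?Z TX (\<lambda>z. C (fst z, d (snd z)))"
    by (simp add: o_def)
  moreover have first: "continuous_map ?Z TX (\<lambda>z. fst (snd z))"
    using continuous_map_compose[OF continuous_map_snd continuous_map_from_subtopology[OF continuous_map_fst]]
    by (simp add: o_def)
  ultimately have "continuous_map ?Z (prod_topology TX TX) (\<lambda>z. (fst (snd z), C (fst z, d (snd z))))"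
    by (simp add: continuous_map_pairwise o_def)
  moreover have "continuous_map (prod_topology TX TX) TX (\<lambda>(x, y). x \<otimes>\<^bsub>X\<^esub> y)"
    using X by (simp add: topological_group_def)
  ultimately have "continuous_map ?Z TX ((\<lambda>(x, y). x \<otimes>\<^bsub>X\<^esub> y) \<circ> (\<lambda>z. (fst (snd z), C (fst z, d (snd z)))))"
    by (rule continuous_map_compose)
  with first show ?thesis
    by (simp add: continuous_map_pairwise o_def d_def)
qed

definition stabilizer :: "('g, 'b) monoid_scheme \<Rightarrow> ('g \<Rightarrow> 'x \<Rightarrow> 'x) \<Rightarrow> 'x \<Rightarrow> 'g set" where
  "stabilizer G act x = {g \<in> carrier G. act g x = x}"

locale topological_group_action =
  fixes G :: "'g monoid" and TG :: "'g topology"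
    and X :: "'x monoid" and TX :: "'x topology"
    and act :: "'g \<Rightarrow> 'x \<Rightarrow> 'x"
  assumes topological_group_G: "topological_group G TG"
    and topological_group_X: "topological_group X TX"
    and continuous_action: "continuous_action G TG TX act"
    and act_hom: "\<forall>g\<in>carrier G. act g \<in> hom X X"
begin

sublocale G: group G
  using topological_group_G by (simp add: topological_group_def)

sublocale X: group X
  using topological_group_X by (simp add: topological_group_def)

lemma topspace_TG [simp]: "topspace TG = carrier G"
  using topological_group_G by (simp add: topological_group_def)

lemma topspace_TX [simp]: "topspace TX = carrier X"
  using topological_group_X by (simp add: topological_group_def)

lemma continuous_map_mult_X: "continuous_map (prod_topology TX TX) TX (\<lambda>(x, y). x \<otimes>\<^bsub>X\<^esub> y)"
  using topological_group_X by (simp add: topological_group_def)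

lemma continuous_map_act: "continuous_map (prod_topology TG TX) TX (\<lambda>(g, x). act g x)"
  using continuous_action by (simp add: continuous_action_def)

lemma act_one [simp]: "x \<in> carrier X \<Longrightarrow> act \<one>\<^bsub>G\<^esub> x = x"
  using continuous_action by (simp add: continuous_action_def)

lemma act_act:
  "\<lbrakk>g \<in> carrier G; h \<in> carrier G; x \<in> carrier X\<rbrakk> \<Longrightarrow> act (g \<otimes>\<^bsub>G\<^esub> h) x = act g (act h x)"
  using continuous_action by (simp add: continuous_action_def)

lemma act_closed [simp]: "\<lbrakk>g \<in> carrier G; x \<in> carrier X\<rbrakk> \<Longrightarrow> act g x \<in> carrier X"
  using act_hom by (auto simp: hom_def)

lemma act_mult:
  "\<lbrakk>g \<in> carrier G; x \<in> carrier X; y \<in> carrier X\<rbrakk> \<Longrightarrow> act g (x \<otimes>\<^bsub>X\<^esub> y) = act g x \<otimes>\<^bsub>X\<^esub> act g y"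
  using act_hom by (auto simp: hom_def)

lemma group_hom_act: "g \<in> carrier G \<Longrightarrow> group_hom X X (act g)"
  using act_hom X.group_axioms by (simp add: group_hom_def group_hom_axioms_def)

lemma act_unit [simp]: "g \<in> carrier G \<Longrightarrow> act g \<one>\<^bsub>X\<^esub> = \<one>\<^bsub>X\<^esub>"
  using group_hom.hom_one[OF group_hom_act] by blast

lemma act_inv: "\<lbrakk>g \<in> carrier G; x \<in> carrier X\<rbrakk> \<Longrightarrow> act g (inv\<^bsub>X\<^esub> x) = inv\<^bsub>X\<^esub> (act g x)"
  using group_hom.hom_inv[OF group_hom_act] by blast

lemma invariant_set_slice:
  assumes "invariant_set G (diag_action act) U"
  shows "invariant_set G act {x \<in> topspace TX. (\<one>\<^bsub>X\<^esub>, x) \<in> U}"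
  unfolding invariant_set_def
proof (intro ballI)
  fix g x assume g: "g \<in> carrier G" and x: "x \<in> {x \<in> topspace TX. (\<one>\<^bsub>X\<^esub>, x) \<in> U}"
  then have "diag_action act g (\<one>\<^bsub>X\<^esub>, x) \<in> U"
    using assms unfolding invariant_set_def by blast
  with g x show "act g x \<in> {x \<in> topspace TX. (\<one>\<^bsub>X\<^esub>, x) \<in> U}"
    by simp
qed

lemma G_categorical_slice:
  assumes planner: "equivariant_motion_planner G TX act U s"
  defines "V \<equiv> {x \<in> topspace TX. (\<one>\<^bsub>X\<^esub>, x) \<in> U}"
  shows "openin TX V \<and> G_categorical G TX act V"
proof -
  define \<iota> where "\<iota> = (\<lambda>x::'x. (\<one>\<^bsub>X\<^esub>, x))"
  have U: "openin (prod_topology TX TX) U" "invariant_set G (diag_action act) U"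
    using planner unfolding equivariant_motion_planner_def by auto
  have \<iota>: "continuous_map TX (prod_topology TX TX) \<iota>"
    unfolding \<iota>_def continuous_map_pairwise o_def by simp
  have V_open: "openin TX V"
    using openin_continuous_map_preimage[OF \<iota> U(1)] by (simp add: V_def \<iota>_def)
  have \<iota>_act: "\<iota> (act g x) = diag_action act g (\<iota> x)" if "g \<in> carrier G" for g x
    using that by (simp add: \<iota>_def)
  have "continuous_map (subtopology TX V) (subtopology (prod_topology TX TX) U) \<iota>"
    unfolding continuous_map_in_subtopology
    using continuous_map_from_subtopology[OF \<iota>] by (auto simp: V_def \<iota>_def)
  then have "homotopic_with (equivariant_on G act act V) (subtopology TX V) TX (fst \<circ> \<iota>) (snd \<circ> \<iota>)"
  proof (rule homotopic_with_compose_continuous_map_right[OF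
        equivariant_motion_planner_projections_homotopic[OF planner]])
    fix j assume j: "equivariant_on G (diag_action act) act U j"
    show "equivariant_on G act act V (j \<circ> \<iota>)"
      unfolding equivariant_on_def
    proof (intro ballI)
      fix g x assume g: "g \<in> carrier G" and "x \<in> V"
      then have "\<iota> x \<in> U"
        by (simp add: V_def \<iota>_def)
      with j g have "j (diag_action act g (\<iota> x)) = act g (j (\<iota> x))"
        unfolding equivariant_on_def by blast
      then show "(j \<circ> \<iota>) (act g x) = act g ((j \<circ> \<iota>) x)"
        by (simp only: o_def \<iota>_act[OF g])
    qed
  qed
  from homotopic_with_symD[OF this]
  have "homotopic_with (equivariant_on G act act V) (subtopology TX V) TX id (\<lambda>x. \<one>\<^bsub>X\<^esub>)"
    by (simp add: o_def \<iota>_def id_def)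
  moreover have "(\<lambda>x. \<one>\<^bsub>X\<^esub>) ` V \<subseteq> orbit G act \<one>\<^bsub>X\<^esub>"
    unfolding orbit_def by force
  moreover have "V \<subseteq> topspace TX"
    unfolding V_def by blast
  ultimately show ?thesis
    unfolding G_categorical_def G_homotopic_def using V_open invariant_set_slice[OF U(2), folded V_def]
    by (intro conjI exI[of _ "\<lambda>x. \<one>\<^bsub>X\<^esub>"] exI[of _ "\<one>\<^bsub>X\<^esub>"]) simp_all
qed

lemma continuous_map_orbit_map: "x \<in> carrier X \<Longrightarrow> continuous_map TG TX (\<lambda>g. act g x)"
  using continuous_map_compose[OF _ continuous_map_act, of TG "\<lambda>g. (g, x)"]
  by (simp add: o_def continuous_map_pairwise)

lemma subgroup_stabilizer:
  assumes x: "x \<in> carrier X"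
  shows "subgroup (stabilizer G act x) G"
proof (rule subgroup.intro)
  fix g assume "g \<in> stabilizer G act x"
  then have g: "g \<in> carrier G" "act g x = x"
    by (auto simp: stabilizer_def)
  then have "act (inv\<^bsub>G\<^esub> g) x = act (inv\<^bsub>G\<^esub> g) (act g x)"
    by simp
  also have "\<dots> = x"
    using g(1) x by (simp add: act_act[symmetric])
  finally show "inv\<^bsub>G\<^esub> g \<in> stabilizer G act x"
    using g by (simp add: stabilizer_def)
qed (use x in \<open>auto simp: stabilizer_def act_act\<close>)

lemma closedin_stabilizer:
  assumes "Hausdorff_space TX" "x \<in> carrier X"
  shows "closedin TG (stabilizer G act x)"
proof -
  have "stabilizer G act x = {g \<in> topspace TG. act g x \<in> {x}}"
    by (auto simp: stabilizer_def)
  then show ?thesis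
    using closedin_continuous_map_preimage[OF continuous_map_orbit_map closedin_Hausdorff_singleton]
      assms by simp
qed

lemma act_fixed_set_stabilizer_eq:
  assumes g: "g \<in> carrier G" "g' \<in> carrier G" and x: "x \<in> carrier X" and "act g x = act g' x"
    and y: "y \<in> fixed_set TX act (stabilizer G act x)"
  shows "act g y = act g' y"
proof -
  define h where "h = inv\<^bsub>G\<^esub> g \<otimes>\<^bsub>G\<^esub> g'"
  have h: "h \<in> carrier G"
    using g by (simp add: h_def)
  have "act h x = act (inv\<^bsub>G\<^esub> g) (act g' x)"
    using g x by (simp add: h_def act_act)
  also have "\<dots> = act (inv\<^bsub>G\<^esub> g) (act g x)"
    using assms(4) by simp
  also have "\<dots> = x"
    using g x by (simp add: act_act[symmetric])
  finally have "act h y = y"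
    using h y by (simp add: stabilizer_def fixed_set_def)
  moreover have "g' = g \<otimes>\<^bsub>G\<^esub> h"
    using g by (simp add: h_def G.m_assoc[symmetric])
  ultimately show ?thesis
    using g h y by (simp add: act_act fixed_set_def)
qed

lemma path_to_unit_in_fixed_set:
  assumes "G_connected G TG TX act" "Hausdorff_space TX" "x \<in> carrier X"
  obtains \<gamma> where "pathin TX \<gamma>" "\<gamma> 0 = x" "\<gamma> 1 = \<one>\<^bsub>X\<^esub>"
    "\<And>t. t \<in> {0..1} \<Longrightarrow> \<gamma> t \<in> fixed_set TX act (stabilizer G act x)"
proof -
  let ?F = "fixed_set TX act (stabilizer G act x)"
  have "path_connected_space (subtopology TX ?F)"
    using assms subgroup_stabilizer closedin_stabilizer
    unfolding G_connected_def path_connectedin_def by blast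
  moreover have "x \<in> topspace (subtopology TX ?F)" "\<one>\<^bsub>X\<^esub> \<in> topspace (subtopology TX ?F)"
    using assms(3) by (auto simp: fixed_set_def stabilizer_def)
  ultimately obtain \<gamma> where "pathin (subtopology TX ?F) \<gamma>" "\<gamma> 0 = x" "\<gamma> 1 = \<one>\<^bsub>X\<^esub>"
    unfolding path_connected_space_def by blast
  then show ?thesis
    using that pathin_subtopology by blast
qed

lemma quotient_map_orbit_map:
  assumes "compact_space TG" "Hausdorff_space TX" and x: "x \<in> carrier X"
  shows "quotient_map (prod_topology (top_of_set {0..1::real}) TG)
           (prod_topology (top_of_set {0..1}) (subtopology TX (orbit G act x)))
           (\<lambda>z. (fst z, act (snd z) x))"
proof (rule continuous_imp_quotient_map)
  have "continuous_map (prod_topology (top_of_set {0..1::real}) TG) (subtopology TX (orbit G act x))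
          (\<lambda>z. act (snd z) x)"
    unfolding continuous_map_in_subtopology
    using continuous_map_compose[OF continuous_map_snd continuous_map_orbit_map[OF x]]
    by (auto simp: o_def orbit_def)
  then show "continuous_map (prod_topology (top_of_set {0..1::real}) TG)
      (prod_topology (top_of_set {0..1}) (subtopology TX (orbit G act x))) (\<lambda>z. (fst z, act (snd z) x))"
    unfolding continuous_map_pairwise by (simp add: o_def continuous_map_fst)
  show "compact_space (prod_topology (top_of_set {0..1::real}) TG)"
    using assms(1) by (simp add: compact_space_prod_topology compact_space_subtopology)
  show "Hausdorff_space (prod_topology (top_of_set {0..1::real}) (subtopology TX (orbit G act x)))"
    using assms(2) by (simp add: Hausdorff_space_prod_topology Hausdorff_space_subtopology)
  show "(\<lambda>z. (fst z, act (snd z) x)) ` topspace (prod_topology (top_of_set {0..1::real}) TG)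
      = topspace (prod_topology (top_of_set {0..1}) (subtopology TX (orbit G act x)))"
    using x by (auto simp: orbit_def) (force simp: image_iff)
qed

text \<open>The extension \<open>g x \<mapsto> g \<gamma>(t)\<close> is well defined because \<open>\<gamma>\<close> stays in the fixed set of
  the stabilizer of \<open>x\<close>, and continuous because it factors through the quotient map above.\<close>
lemma orbit_path_extension:
  assumes "compact_space TG" "Hausdorff_space TX" and x: "x \<in> carrier X" and \<gamma>: "pathin TX \<gamma>"
    and \<gamma>_fixed: "\<And>t. t \<in> {0..1} \<Longrightarrow> \<gamma> t \<in> fixed_set TX act (stabilizer G act x)"
  obtains \<Phi> where
    "continuous_map (prod_topology (top_of_set {0..1::real}) (subtopology TX (orbit G act x))) TX \<Phi>"
    "\<And>t g. \<lbrakk>t \<in> {0..1}; g \<in> carrier G\<rbrakk> \<Longrightarrow> \<Phi> (t, act g x) = act g (\<gamma> t)"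
proof -
  let ?A = "prod_topology (top_of_set {0..1::real}) TG"
  define q where "q = (\<lambda>z::real \<times> 'g. (fst z, act (snd z) x))"
  have "continuous_map ?A (prod_topology TG TX) (\<lambda>z. (snd z, \<gamma> (fst z)))"
    using continuous_map_compose[OF continuous_map_fst \<gamma>[unfolded pathin_def]]
    by (simp add: continuous_map_pairwise o_def continuous_map_snd)
  from continuous_map_compose[OF this continuous_map_act]
  have lift: "continuous_map ?A TX (\<lambda>z. act (snd z) (\<gamma> (fst z)))"
    by (simp add: o_def)
  have lift_pair: "act g (\<gamma> t) = act g' (\<gamma> t')"
    if "(t, g) \<in> topspace ?A" "(t', g') \<in> topspace ?A" "q (t, g) = q (t', g')" for t t' g g'
  proof -
    have "t' = t" and gx: "act g x = act g' x" and t: "t \<in> {0..1}" and g: "g \<in> carrier G" "g' \<in> carrier G"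
      using that by (simp_all add: q_def)
    then show ?thesis
      using act_fixed_set_stabilizer_eq[OF g x gx \<gamma>_fixed[OF t]] by simp
  qed
  obtain \<Phi> where \<Phi>: "continuous_map (prod_topology (top_of_set {0..1}) (subtopology TX (orbit G act x))) TX \<Phi>"
    and \<Phi>_q: "\<And>z. z \<in> topspace ?A \<Longrightarrow> \<Phi> (q z) = act (snd z) (\<gamma> (fst z))"
  proof (rule quotient_map_lift_exists[OF quotient_map_orbit_map[OF assms(1-3), folded q_def] lift])
    fix z z' assume "z \<in> topspace ?A" "z' \<in> topspace ?A" "q z = q z'"
    moreover obtain t g t' g' where "z = (t, g)" "z' = (t', g')"
      by (cases z, cases z')
    ultimately show "act (snd z) (\<gamma> (fst z)) = act (snd z') (\<gamma> (fst z'))"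
      using lift_pair[of t g t' g'] by (simp only: fst_conv snd_conv)
  qed (rule that)
  show ?thesis
  proof (rule that[OF \<Phi>])
    fix t :: real and g assume "t \<in> {0..1}" "g \<in> carrier G"
    then show "\<Phi> (t, act g x) = act g (\<gamma> t)"
      using \<Phi>_q[of "(t, g)"] by (simp add: q_def)
  qed
qed

lemma orbit_contraction:
  assumes "compact_space TG" "Hausdorff_space TX" "G_connected G TG TX act" and x: "x \<in> carrier X"
  obtains \<Phi> where
    "continuous_map (prod_topology (top_of_set {0..1::real}) (subtopology TX (orbit G act x))) TX \<Phi>"
    "\<And>y. y \<in> orbit G act x \<Longrightarrow> \<Phi> (0, y) = y"
    "\<And>y. y \<in> orbit G act x \<Longrightarrow> \<Phi> (1, y) = \<one>\<^bsub>X\<^esub>"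
    "\<And>t g y. \<lbrakk>t \<in> {0..1}; g \<in> carrier G; y \<in> orbit G act x\<rbrakk> \<Longrightarrow> \<Phi> (t, act g y) = act g (\<Phi> (t, y))"
proof -
  obtain \<gamma> where \<gamma>: "pathin TX \<gamma>" "\<gamma> 0 = x" "\<gamma> 1 = \<one>\<^bsub>X\<^esub>"
    and \<gamma>_fixed: "\<And>t. t \<in> {0..1} \<Longrightarrow> \<gamma> t \<in> fixed_set TX act (stabilizer G act x)"
    using path_to_unit_in_fixed_set assms(2-4) by metis
  obtain \<Phi> where \<Phi>: "continuous_map (prod_topology (top_of_set {0..1::real}) (subtopology TX (orbit G act x))) TX \<Phi>"
    and \<Phi>_orbit: "\<And>t g. \<lbrakk>t \<in> {0..1}; g \<in> carrier G\<rbrakk> \<Longrightarrow> \<Phi> (t, act g x) = act g (\<gamma> t)"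
    using orbit_path_extension[OF assms(1,2) x \<gamma>(1) \<gamma>_fixed] by metis
  show ?thesis
  proof
    fix t :: real and g y assume t: "t \<in> {0..1}" and g: "g \<in> carrier G" and "y \<in> orbit G act x"
    then obtain g' where g': "g' \<in> carrier G" "y = act g' x"
      by (auto simp: orbit_def)
    have "\<gamma> t \<in> carrier X"
      using \<gamma>_fixed[OF t] by (simp add: fixed_set_def)
    with t g g' x show "\<Phi> (t, act g y) = act g (\<Phi> (t, y))"
      by (simp add: \<Phi>_orbit act_act[symmetric])
  next
    fix y assume "y \<in> orbit G act x"
    then obtain g where g: "g \<in> carrier G" "y = act g x"
      by (auto simp: orbit_def)
    then show "\<Phi> (0, y) = y" "\<Phi> (1, y) = \<one>\<^bsub>X\<^esub>"
      using \<Phi>_orbit[of 0 g] \<Phi>_orbit[of 1 g] \<gamma>(2,3) by simp_all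
  qed (rule \<Phi>)
qed

lemma G_categorical_contractible:
  assumes "compact_space TG" "Hausdorff_space TX" "G_connected G TG TX act"
    and "G_categorical G TX act V"
  shows "homotopic_with (equivariant_on G act act V) (subtopology TX V) TX id (\<lambda>x. \<one>\<^bsub>X\<^esub>)"
proof -
  obtain f x0 where V: "V \<subseteq> topspace TX" "invariant_set G act V" and x0: "x0 \<in> carrier X"
    and id_f: "homotopic_with (equivariant_on G act act V) (subtopology TX V) TX id f"
    and f_orbit: "f ` V \<subseteq> orbit G act x0"
    using assms(4) unfolding G_categorical_def G_homotopic_def by auto
  obtain \<Phi> where \<Phi>: "continuous_map (prod_topology (top_of_set {0..1::real}) (subtopology TX (orbit G act x0))) TX \<Phi>"
    and \<Phi>0: "\<And>y. y \<in> orbit G act x0 \<Longrightarrow> \<Phi> (0, y) = y"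
    and \<Phi>1: "\<And>y. y \<in> orbit G act x0 \<Longrightarrow> \<Phi> (1, y) = \<one>\<^bsub>X\<^esub>"
    and \<Phi>_act: "\<And>t g y. \<lbrakk>t \<in> {0..1}; g \<in> carrier G; y \<in> orbit G act x0\<rbrakk> \<Longrightarrow> \<Phi> (t, act g y) = act g (\<Phi> (t, y))"
    using orbit_contraction[OF assms(1-3) x0] by metis
  have f: "continuous_map (subtopology TX V) TX f" "equivariant_on G act act V f"
    using homotopic_with_imp_continuous_maps[OF id_f] homotopic_with_imp_property[OF id_f] by auto
  then have "continuous_map (subtopology TX V) (subtopology TX (orbit G act x0)) f"
    using f_orbit V(1) by (auto simp: continuous_map_in_subtopology)
  then have "continuous_map (prod_topology (top_of_set {0..1}) (subtopology TX V))
      (prod_topology (top_of_set {0..1}) (subtopology TX (orbit G act x0))) (\<lambda>z. (fst z, f (snd z)))"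
    using continuous_map_compose[OF continuous_map_snd]
    by (simp add: continuous_map_pairwise o_def continuous_map_fst)
  from continuous_map_compose[OF this \<Phi>]
  have contraction: "continuous_map (prod_topology (top_of_set {0..1}) (subtopology TX V)) TX
      (\<lambda>z. \<Phi> (fst z, f (snd z)))"
    by (simp add: o_def)
  have "homotopic_with (equivariant_on G act act V) (subtopology TX V) TX f (\<lambda>x. \<one>\<^bsub>X\<^esub>)"
    unfolding homotopic_with_equivariant_on[OF V(2) V(1)]
  proof (intro exI[of _ "\<lambda>z. \<Phi> (fst z, f (snd z))"] conjI ballI)
    fix t assume t: "t \<in> {0..1::real}"
    show "equivariant_on G act act V (\<lambda>x. \<Phi> (fst (t, x), f (snd (t, x))))"
      unfolding equivariant_on_def
    proof (intro ballI)
      fix g x assume "g \<in> carrier G" "x \<in> V"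
      then show "\<Phi> (fst (t, act g x), f (snd (t, act g x))) = act g (\<Phi> (fst (t, x), f (snd (t, x))))"
        using f(2) f_orbit \<Phi>_act[OF t] unfolding equivariant_on_def by auto
    qed
  qed (use contraction f_orbit \<Phi>0 \<Phi>1 in auto)
  then show ?thesis
    using homotopic_with_trans[OF id_f] by blast
qed

lemma inv_mult_diag_action:
  assumes "g \<in> carrier G" "p \<in> topspace (prod_topology TX TX)"
  shows "inv\<^bsub>X\<^esub> (fst (diag_action act g p)) \<otimes>\<^bsub>X\<^esub> snd (diag_action act g p)
           = act g (inv\<^bsub>X\<^esub> (fst p) \<otimes>\<^bsub>X\<^esub> snd p)"
  using assms by (cases p) (simp add: act_mult act_inv)

lemma invariant_set_inv_mult_preimage:
  assumes "invariant_set G act V"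
  shows "invariant_set G (diag_action act)
           {p \<in> topspace (prod_topology TX TX). inv\<^bsub>X\<^esub> (fst p) \<otimes>\<^bsub>X\<^esub> snd p \<in> V}"
  unfolding invariant_set_def
proof (intro ballI)
  fix g p assume g: "g \<in> carrier G"
    and p: "p \<in> {p \<in> topspace (prod_topology TX TX). inv\<^bsub>X\<^esub> (fst p) \<otimes>\<^bsub>X\<^esub> snd p \<in> V}"
  then have "act g (inv\<^bsub>X\<^esub> (fst p) \<otimes>\<^bsub>X\<^esub> snd p) \<in> V"
    using assms unfolding invariant_set_def by blast
  moreover have "diag_action act g p \<in> topspace (prod_topology TX TX)"
    using g p by (cases p) simp
  ultimately show "diag_action act g p
      \<in> {p \<in> topspace (prod_topology TX TX). inv\<^bsub>X\<^esub> (fst p) \<otimes>\<^bsub>X\<^esub> snd p \<in> V}"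
    using inv_mult_diag_action[OF g] p by simp
qed

lemma deformation_onto_diagonal:
  assumes V: "V \<subseteq> carrier X" "invariant_set G act V"
    and contraction: "homotopic_with (equivariant_on G act act V) (subtopology TX V) TX id (\<lambda>x. \<one>\<^bsub>X\<^esub>)"
  defines "U \<equiv> {p \<in> topspace (prod_topology TX TX). inv\<^bsub>X\<^esub> (fst p) \<otimes>\<^bsub>X\<^esub> snd p \<in> V}"
  shows "homotopic_with (equivariant_on G (diag_action act) (diag_action act) U)
           (subtopology (prod_topology TX TX) U) (prod_topology TX TX) id (\<lambda>p. (fst p, fst p))"
proof -
  define d where "d = (\<lambda>p. inv\<^bsub>X\<^esub> (fst p) \<otimes>\<^bsub>X\<^esub> snd p)"
  let ?Z = "prod_topology (top_of_set {0..1::real}) (subtopology (prod_topology TX TX) U)"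
  obtain C where C: "continuous_map (prod_topology (top_of_set {0..1::real}) (subtopology TX V)) TX C"
    and C0: "\<And>x. x \<in> V \<Longrightarrow> C (0, x) = x" and C1: "\<And>x. x \<in> V \<Longrightarrow> C (1, x) = \<one>\<^bsub>X\<^esub>"
    and C_act: "\<And>t. t \<in> {0..1} \<Longrightarrow> equivariant_on G act act V (\<lambda>x. C (t, x))"
    using contraction unfolding homotopic_with_equivariant_on[OF V(2) V(1)[folded topspace_TX]] id_apply by blast
  have U: "invariant_set G (diag_action act) U" "U \<subseteq> topspace (prod_topology TX TX)"
    unfolding U_def using invariant_set_inv_mult_preimage[OF V(2)] by auto
  have K: "continuous_map ?Z (prod_topology TX TX) (\<lambda>z. (fst (snd z), fst (snd z) \<otimes>\<^bsub>X\<^esub> C (fst z, d (snd z))))"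
    using continuous_map_translated_homotopy[OF topological_group_X C, folded U_def] by (simp add: d_def)
  have C_closed: "C (t, v) \<in> carrier X" if "t \<in> {0..1}" "v \<in> V" for t v
    using continuous_map_image_subset_topspace[OF C] that V(1) by (auto simp: image_subset_iff)
  show ?thesis
    unfolding homotopic_with_equivariant_on[OF U]
  proof (intro exI[of _ "\<lambda>z. (fst (snd z), fst (snd z) \<otimes>\<^bsub>X\<^esub> C (fst z, d (snd z)))"] conjI ballI K)
    fix p assume "p \<in> U"
    then have p: "fst p \<in> carrier X" "snd p \<in> carrier X" "d p \<in> V"
      by (auto simp: U_def d_def)
    show "(fst (snd (0::real, p)), fst (snd (0::real, p)) \<otimes>\<^bsub>X\<^esub> C (fst (0::real, p), d (snd (0::real, p)))) = id p"
      using p C0 by (simp add: d_def X.m_assoc[symmetric])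
    show "(fst (snd (1::real, p)), fst (snd (1::real, p)) \<otimes>\<^bsub>X\<^esub> C (fst (1::real, p), d (snd (1::real, p)))) = (fst p, fst p)"
      using p C1 by simp
  next
    fix t :: real assume t: "t \<in> {0..1}"
    show "equivariant_on G (diag_action act) (diag_action act) U
        (\<lambda>p. (fst (snd (t, p)), fst (snd (t, p)) \<otimes>\<^bsub>X\<^esub> C (fst (t, p), d (snd (t, p)))))"
      unfolding equivariant_on_def
    proof (intro ballI)
      fix g p assume g: "g \<in> carrier G" and "p \<in> U"
      then have p: "p \<in> topspace (prod_topology TX TX)" "fst p \<in> carrier X" "d p \<in> V"
        by (auto simp: U_def d_def)
      have "C (t, d (diag_action act g p)) = act g (C (t, d p))"
        using C_act[OF t] g p inv_mult_diag_action[OF g p(1)] unfolding equivariant_on_def d_def by auto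
      then show "(fst (snd (t, diag_action act g p)),
            fst (snd (t, diag_action act g p)) \<otimes>\<^bsub>X\<^esub> C (fst (t, diag_action act g p), d (snd (t, diag_action act g p))))
          = diag_action act g (fst (snd (t, p)), fst (snd (t, p)) \<otimes>\<^bsub>X\<^esub> C (fst (t, p), d (snd (t, p))))"
        using g p C_closed[OF t p(3)] by (simp add: act_mult)
    qed
  qed
qed

lemma equivariant_motion_planner_constant_paths:
  assumes V: "openin TX V" "invariant_set G act V"
    and contraction: "homotopic_with (equivariant_on G act act V) (subtopology TX V) TX id (\<lambda>x. \<one>\<^bsub>X\<^esub>)"
  shows "equivariant_motion_planner G TX act
           {p \<in> topspace (prod_topology TX TX). inv\<^bsub>X\<^esub> (fst p) \<otimes>\<^bsub>X\<^esub> snd p \<in> V}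
           (\<lambda>u t. if t \<in> {0..1} then fst u else undefined)"
  unfolding equivariant_motion_planner_def G_homotopic_def
proof (intro conjI)
  show "openin (prod_topology TX TX)
      {p \<in> topspace (prod_topology TX TX). inv\<^bsub>X\<^esub> (fst p) \<otimes>\<^bsub>X\<^esub> snd p \<in> V}"
    using openin_continuous_map_preimage[OF continuous_map_inv_mult[OF topological_group_X] V(1)] .
  show "continuous_map (subtopology (prod_topology TX TX)
      {p \<in> topspace (prod_topology TX TX). inv\<^bsub>X\<^esub> (fst p) \<otimes>\<^bsub>X\<^esub> snd p \<in> V})
      (compact_open_path_topology TX) (\<lambda>u t. if t \<in> {0..1} then fst u else undefined)"
    by (rule continuous_map_constant_paths[OF continuous_map_from_subtopology[OF continuous_map_fst]])
  show "homotopic_with (equivariant_on G (diag_action act) (diag_action act)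
      {p \<in> topspace (prod_topology TX TX). inv\<^bsub>X\<^esub> (fst p) \<otimes>\<^bsub>X\<^esub> snd p \<in> V})
      (subtopology (prod_topology TX TX) {p \<in> topspace (prod_topology TX TX). inv\<^bsub>X\<^esub> (fst p) \<otimes>\<^bsub>X\<^esub> snd p \<in> V})
      (prod_topology TX TX)
      (\<lambda>u. (if (0::real) \<in> {0..1} then fst u else undefined, if (1::real) \<in> {0..1} then fst u else undefined)) id"
    using homotopic_with_symD[OF deformation_onto_diagonal[OF openin_subset[OF V(1), simplified] V(2) contraction]]
    by simp
qed (use invariant_set_inv_mult_preimage[OF V(2)] in simp_all)

lemma G_categorical_cover_of_motion_planner_cover:
  assumes planners: "\<forall>i<k. equivariant_motion_planner G TX act (U i) (s i)"
    and cover: "topspace (prod_topology TX TX) \<subseteq> (\<Union>i<k. U i)"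
  shows "\<exists>V. (\<forall>i<k. openin TX (V i) \<and> G_categorical G TX act (V i)) \<and> topspace TX \<subseteq> (\<Union>i<k. V i)"
proof (intro exI[of _ "\<lambda>i. {x \<in> topspace TX. (\<one>\<^bsub>X\<^esub>, x) \<in> U i}"] conjI allI impI subsetI)
  fix i assume "i < k"
  then show "openin TX {x \<in> topspace TX. (\<one>\<^bsub>X\<^esub>, x) \<in> U i}"
    and "G_categorical G TX act {x \<in> topspace TX. (\<one>\<^bsub>X\<^esub>, x) \<in> U i}"
    using G_categorical_slice[of "U i" "s i"] planners by simp_all
next
  fix x assume "x \<in> topspace TX"
  moreover from this have "(\<one>\<^bsub>X\<^esub>, x) \<in> topspace (prod_topology TX TX)"
    by simp
  ultimately show "x \<in> (\<Union>i<k. {x \<in> topspace TX. (\<one>\<^bsub>X\<^esub>, x) \<in> U i})"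
    using cover by blast
qed

lemma motion_planner_cover_of_G_categorical_cover:
  assumes "compact_space TG" "Hausdorff_space TX" "G_connected G TG TX act"
    and categorical: "\<forall>i<k. openin TX (V i) \<and> G_categorical G TX act (V i)"
    and cover: "topspace TX \<subseteq> (\<Union>i<k. V i)"
  shows "\<exists>U s. (\<forall>i<k. equivariant_motion_planner G TX act (U i) (s i)) \<and>
                topspace (prod_topology TX TX) \<subseteq> (\<Union>i<k. U i)"
proof -
  have planner: "equivariant_motion_planner G TX act
          {p \<in> topspace (prod_topology TX TX). inv\<^bsub>X\<^esub> (fst p) \<otimes>\<^bsub>X\<^esub> snd p \<in> V i}
          (\<lambda>u t. if t \<in> {0..1} then fst u else undefined)" if "i < k" for i
  proof -
    have "openin TX (V i)" and V_categorical: "G_categorical G TX act (V i)"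
      using categorical that by auto
    moreover have "invariant_set G act (V i)"
      using V_categorical unfolding G_categorical_def by blast
    ultimately show ?thesis
      using equivariant_motion_planner_constant_paths G_categorical_contractible[OF assms(1-3)] by blast
  qed
  have "topspace (prod_topology TX TX)
      \<subseteq> (\<Union>i<k. {p \<in> topspace (prod_topology TX TX). inv\<^bsub>X\<^esub> (fst p) \<otimes>\<^bsub>X\<^esub> snd p \<in> V i})"
  proof
    fix p assume p: "p \<in> topspace (prod_topology TX TX)"
    then have "inv\<^bsub>X\<^esub> (fst p) \<otimes>\<^bsub>X\<^esub> snd p \<in> topspace TX"
      by (auto simp: mem_Times_iff)
    with p show "p \<in> (\<Union>i<k. {p \<in> topspace (prod_topology TX TX). inv\<^bsub>X\<^esub> (fst p) \<otimes>\<^bsub>X\<^esub> snd p \<in> V i})"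
      using cover by blast
  qed
  then show ?thesis
    using planner by (intro exI conjI allI impI) simp_all
qed

end

theorem proposition5p12:
  fixes G :: "'g monoid" and TG :: "'g topology"
    and X :: "'x monoid" and TX :: "'x topology"
    and act :: "'g \<Rightarrow> 'x \<Rightarrow> 'x"
  assumes "topological_group G TG" and "compact_space TG" and "Hausdorff_space TG"
    and "topological_group X TX" and "Hausdorff_space TX"
    and "continuous_action G TG TX act"
    and "\<forall>g\<in>carrier G. act g \<in> hom X X"
    and "G_connected G TG TX act"
  shows "TC_G G TX act = cat_G G TX act"
proof -
  interpret topological_group_action G TG X TX act
    using assms by unfold_locales
  have cover_iff: "(\<exists>U s. (\<forall>i<k. equivariant_motion_planner G TX act (U i) (s i)) \<and>
                topspace (prod_topology TX TX) \<subseteq> (\<Union>i<k. U i))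
     \<longleftrightarrow> (\<exists>V. (\<forall>i<k. openin TX (V i) \<and> G_categorical G TX act (V i)) \<and>
                topspace TX \<subseteq> (\<Union>i<k. V i))" for k
  proof
    assume "\<exists>U s. (\<forall>i<k. equivariant_motion_planner G TX act (U i) (s i)) \<and>
                  topspace (prod_topology TX TX) \<subseteq> (\<Union>i<k. U i)"
    then show "\<exists>V. (\<forall>i<k. openin TX (V i) \<and> G_categorical G TX act (V i)) \<and> topspace TX \<subseteq> (\<Union>i<k. V i)"
      by (elim exE conjE) (rule G_categorical_cover_of_motion_planner_cover)
  next
    assume "\<exists>V. (\<forall>i<k. openin TX (V i) \<and> G_categorical G TX act (V i)) \<and> topspace TX \<subseteq> (\<Union>i<k. V i)"
    then show "\<exists>U s. (\<forall>i<k. equivariant_motion_planner G TX act (U i) (s i)) \<and>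
                  topspace (prod_topology TX TX) \<subseteq> (\<Union>i<k. U i)"
      by (elim exE conjE) (rule motion_planner_cover_of_G_categorical_cover[OF assms(2,5,8)])
  qed
  show ?thesis
    unfolding TC_G_eq_motion_planner_covers cat_G_def cover_iff ..
qed

end
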